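(* Let $m>0$, $a_1,a_2\in\mathbb{R}$, $b_0,b_1,b_2\in\mathbb{R}\setminus\{0\}$. Suppose the equation $$\gamma(a_1-\gamma)(a_2-\gamma)J(\gamma)=b_0+b_1\gamma+b_2\gamma^2,\qquad\gamma\in D,$$ has exactly three distinct solutions $\gamma_0,\gamma_1,\gamma_2\in D$. Set $\beta_0=-\gamma_0\gamma_1\gamma_2$, $\beta_1=\gamma_0\gamma_1+\gamma_0\gamma_2+\gamma_1\gamma_2$, $\beta_2=-(\gamma_0+\gamma_1+\gamma_2)$. Then $\beta_0,\beta_1,\beta_2\in\mathbb{R}$; the polynomial $P(M)=M^3+\beta_2M^2+\beta_1M+\beta_0$ has no zeros in $[4m^2,\infty)$; and the functions $\mathfrak h_0,\mathfrak h_1,\mathfrak h_2\in W^{2,2}(\mathbb R)\subset C^1(\mathbb R)$ defined (via Fourier transform, $M=p^2+4m^2$) by $$b_2\hat{\mathfrak h}_2=\Big(\frac{M(M-a_1)(M-a_2)}{P(M)}-1\Big)\hat{\check\rho},\quad b_1\hat{\mathfrak h}_1=-\frac{M\beta_1+\beta_0}{M^2}(\hat{\check\rho}+b_2\hat{\mathfrak h}_2)+\frac{a_1a_2}{M}\hat{\check\rho},\quad b_0\hat{\mathfrak h}_0=-\frac{\beta_0}{M}(\hat{\check\rho}+b_2\hat{\mathfrak h}_2)$$ satisfy $\mathfrak h_0(0)=\mathfrak h_1(0)=\mathfrak h_2(0)=1$.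
   Context: $\rho(M)=\frac{1}{16\pi^2}\sqrt{1-\frac{4m^2}{M}}\frac1M$ for $M\ge4m^2$; $\check\rho(z)=\int_{\mathbb{R}}\rho(p^2+4m^2)|p|e^{\mathrm ipz}dp$; Fourier transform $\hat f(p)=\int e^{-\mathrm ipz}f(z)dz$. $J(z):=\int_{4m^2}^\infty\frac{\rho(M)}{M-z}dM$ for $z\in D:=\{z\in\mathbb{C}:\ \mathrm{Im}\,z\ne0\}\cup\{z\in\mathbb{R}: z<4m^2\}$. *)

theory Defs
  imports "HOL-Analysis.Analysis"
begin

definition rho :: "real \<Rightarrow> real \<Rightarrow> real" where
  "rho m M = (if 4 * m^2 \<le> M then 1 / (16 * pi^2) * sqrt (1 - 4 * m^2 / M) / M else 0)"

definition J :: "real \<Rightarrow> complex \<Rightarrow> complex" where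
  "J m z = (LBINT M:{4 * m^2..}. complex_of_real (rho m M) / (complex_of_real M - z))"

definition D :: "real \<Rightarrow> complex set" where
  "D m = {z. Im z \<noteq> 0} \<union> {z. Im z = 0 \<and> Re z < 4 * m^2}"

text \<open>Fourier transform (convention hat f(p) = int e^(-ipz) f(z) dz) of
  check rho(z) = int rho(p^2+4m^2) |p| e^(ipz) dp, i.e. 2 pi rho(p^2+4m^2)|p|.\<close>
definition rhocheck_hat :: "real \<Rightarrow> real \<Rightarrow> complex" where
  "rhocheck_hat m p = complex_of_real (2 * pi * rho m (p^2 + 4 * m^2) * \<bar>p\<bar>)"

definition inv_fourier :: "(real \<Rightarrow> complex) \<Rightarrow> real \<Rightarrow> complex" where
  "inv_fourier g z = (1 / (2 * pi)) * (LINT p|lborel. g p * exp (\<i> * complex_of_real (p * z)))"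

text \<open>g is the Fourier transform of a W^{2,2}(R) function: (1+p^2) g(p) is in L^2.\<close>
definition W22_hat :: "(real \<Rightarrow> complex) \<Rightarrow> bool" where
  "W22_hat g \<longleftrightarrow> g \<in> borel_measurable lborel \<and>
     integrable lborel (\<lambda>p. (norm ((1 + p^2) * g p))^2)"

end

theory Submission
  imports Defs "HOL-Probability.Sinc_Integral"
begin

(* The solution set is closed under complex conjugation, because rho and the coefficients are
   real and J (cnj z) = cnj (J z); hence the elementary symmetric functions beta_k of the roots are
   real, and P(M) = (M - gamma0)(M - gamma1)(M - gamma2) has no zero on [4m^2, oo), which is the
   complement of D in R.
   By partial fractions each hat h_k equals (1/b_k) sum_j w_kj hat(check rho)(p) / (M - gamma_j).
   Every such term is O(|p| / (1 + p^2)^2), so h_k lies in W^{2,2}, and the substitution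
   M = p^2 + 4m^2 turns its integral into 2 pi J(gamma_j); thus h_k(0) = (1/b_k) sum_j w_kj J(gamma_j).
   The equation gamma_j (a1 - gamma_j)(a2 - gamma_j) J(gamma_j) = b0 + b1 gamma_j + b2 gamma_j^2
   turns this into a Lagrange-interpolation identity for b0 + b1 x + b2 x^2, whose value is b_k. *)

section \<open>Functions decaying like p / (1 + p^2)^2\<close>

lemma abs_le_one_plus_square: "\<bar>x::real\<bar> \<le> 1 + x^2"
  using zero_le_power2[of "\<bar>x\<bar> - 1"] by (simp add: power2_eq_square algebra_simps abs_mult_self_eq)

lemma min_one_mult_one_plus_square_le:
  fixes x c :: real
  assumes "c > 0"
  shows "min 1 c * (1 + x^2) \<le> x^2 + c"
proof (cases "c \<le> 1")
  case True
  then have "c * x^2 \<le> x^2" by (simp add: mult_left_le_one_le assms less_imp_le)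
  then show ?thesis using True by (simp add: algebra_simps)
qed simp

lemma integrable_inverse_one_plus_square: "integrable lborel (\<lambda>x::real. inverse (1 + x^2))"
  using integrable_inverse_1_plus_square unfolding set_integrable_def by simp

definition cubic_decay :: "(real \<Rightarrow> complex) \<Rightarrow> bool" where
  "cubic_decay h \<longleftrightarrow> h \<in> borel_measurable borel \<and> (\<exists>C. \<forall>p. norm (h p) \<le> C * \<bar>p\<bar> / (1 + p^2)^2)"

lemma cubic_decay_add:
  assumes "cubic_decay f" "cubic_decay g"
  shows "cubic_decay (\<lambda>p. f p + g p)"
proof -
  obtain C D where C: "\<And>p. norm (f p) \<le> C * \<bar>p\<bar> / (1 + p^2)^2"
    and D: "\<And>p. norm (g p) \<le> D * \<bar>p\<bar> / (1 + p^2)^2"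
    using assms unfolding cubic_decay_def by blast
  have "norm (f p + g p) \<le> (C + D) * \<bar>p\<bar> / (1 + p^2)^2" for p
  proof -
    have "norm (f p + g p) \<le> C * \<bar>p\<bar> / (1 + p^2)^2 + D * \<bar>p\<bar> / (1 + p^2)^2"
      by (rule norm_triangle_le[OF add_mono[OF C D]])
    then show ?thesis by (simp only: distrib_right add_divide_distrib)
  qed
  with assms show ?thesis unfolding cubic_decay_def by (blast intro: borel_measurable_add)
qed

lemma cubic_decay_cmult:
  assumes "cubic_decay f"
  shows "cubic_decay (\<lambda>p. c * f p)"
proof -
  obtain C where C: "\<And>p. norm (f p) \<le> C * \<bar>p\<bar> / (1 + p^2)^2"
    using assms unfolding cubic_decay_def by blast
  have "norm (c * f p) \<le> (norm c * C) * \<bar>p\<bar> / (1 + p^2)^2" for p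
    using mult_left_mono[OF C, of "norm c"] by (simp add: norm_mult mult.assoc)
  moreover have "(\<lambda>p. c * f p) \<in> borel_measurable borel"
    using assms unfolding cubic_decay_def by (simp add: borel_measurable_times)
  ultimately show ?thesis unfolding cubic_decay_def by blast
qed

lemma cubic_decay_sum:
  assumes "finite I" "\<And>i. i \<in> I \<Longrightarrow> cubic_decay (f i)"
  shows "cubic_decay (\<lambda>p. \<Sum>i\<in>I. f i p)"
  using assms
proof (induction I rule: finite_induct)
  case empty
  show ?case unfolding cubic_decay_def by (simp add: exI[of _ 0])
next
  case (insert i I)
  then show ?case by (simp add: cubic_decay_add)
qed

lemma cubic_decay_imp_integrable:
  assumes "cubic_decay h"
  shows "integrable lborel h"
proof -
  obtain C where C: "\<And>p. norm (h p) \<le> C * \<bar>p\<bar> / (1 + p^2)^2"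
    using assms unfolding cubic_decay_def by blast
  have bound: "norm (h p) \<le> \<bar>C\<bar> * inverse (1 + p^2)" for p
  proof -
    have pos: "1 + p^2 > 0" by (simp add: add_pos_nonneg)
    have "C * \<bar>p\<bar> \<le> \<bar>C\<bar> * \<bar>p\<bar>"
      by (simp add: mult_right_mono)
    also have "\<dots> \<le> \<bar>C\<bar> * (1 + p^2)"
      by (simp add: mult_left_mono abs_le_one_plus_square)
    finally have "C * \<bar>p\<bar> / (1 + p^2)^2 \<le> \<bar>C\<bar> * (1 + p^2) / (1 + p^2)^2"
      by (intro divide_right_mono) auto
    also have "\<dots> = \<bar>C\<bar> * inverse (1 + p^2)"
      using pos by (simp add: power2_eq_square divide_inverse)
    finally show ?thesis using C[of p] by linarith
  qed
  show ?thesis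
  proof (rule Bochner_Integration.integrable_bound)
    show "integrable lborel (\<lambda>p. \<bar>C\<bar> * inverse (1 + p^2))"
      using integrable_inverse_one_plus_square by simp
    show "h \<in> borel_measurable lborel"
      using assms unfolding cubic_decay_def by simp
    show "AE p in lborel. norm (h p) \<le> norm (\<bar>C\<bar> * inverse (1 + p^2))"
      using bound by (simp add: add_pos_nonneg abs_mult)
  qed
qed

lemma cubic_decay_imp_W22_hat:
  assumes "cubic_decay h"
  shows "W22_hat h"
proof -
  obtain C where C: "\<And>p. norm (h p) \<le> C * \<bar>p\<bar> / (1 + p^2)^2"
    using assms unfolding cubic_decay_def by blast
  have hm: "h \<in> borel_measurable borel"
    using assms unfolding cubic_decay_def by simp
  have bound: "(norm ((1 + (of_real p)^2) * h p))^2 \<le> C^2 * inverse (1 + p^2)" for p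
  proof -
    have pos: "1 + p^2 > 0" by (simp add: add_pos_nonneg)
    have "1 + (complex_of_real p)^2 = complex_of_real (1 + p^2)" by simp
    then have "norm ((1 + (of_real p)^2) * h p) = (1 + p^2) * norm (h p)"
      using pos by (simp only: norm_mult norm_of_real)
    also have "\<dots> \<le> (1 + p^2) * (C * \<bar>p\<bar> / (1 + p^2)^2)"
      using C pos by (intro mult_left_mono) auto
    also have "\<dots> = C * \<bar>p\<bar> / (1 + p^2)"
      using pos by (simp add: power2_eq_square)
    finally have "(norm ((1 + (of_real p)^2) * h p))^2 \<le> (C * \<bar>p\<bar> / (1 + p^2))^2"
      by (intro power_mono) auto
    also have "\<dots> = C^2 * (p^2 / (1 + p^2)) * inverse (1 + p^2)"
      using pos by (simp add: power2_eq_square field_simps)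
    also have "\<dots> \<le> C^2 * inverse (1 + p^2)"
      using pos by (intro mult_right_mono mult_left_le) auto
    finally show ?thesis .
  qed
  have "integrable lborel (\<lambda>p. (norm ((1 + (of_real p)^2) * h p))^2)"
  proof (rule Bochner_Integration.integrable_bound)
    show "integrable lborel (\<lambda>p. C^2 * inverse (1 + p^2))"
      using integrable_inverse_one_plus_square by simp
    show "(\<lambda>p. (norm ((1 + (of_real p)^2) * h p))^2) \<in> borel_measurable lborel"
      using hm by measurable
    show "AE p in lborel. norm ((norm ((1 + (of_real p)^2) * h p))^2) \<le> norm (C^2 * inverse (1 + p^2))"
      using bound by (simp add: add_pos_nonneg)
  qed
  with hm show ?thesis unfolding W22_hat_def by simp
qed

lemma closed_norm_diff_lower_bound:
  fixes x :: "'a::real_normed_vector"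
  assumes "closed S" "x \<notin> S"
  obtains \<epsilon> where "\<epsilon> > 0" "\<And>y. y \<in> S \<Longrightarrow> \<epsilon> * norm y \<le> norm (y - x)"
proof (cases "S = {}")
  case True
  then show ?thesis using that[of 1] by simp
next
  case False
  define d where "d = infdist x S"
  have d: "d > 0" using infdist_pos_not_in_closed[OF assms(1) False assms(2)] d_def by simp
  have "d / (d + norm x) * norm y \<le> norm (y - x)" if "y \<in> S" for y
  proof -
    have dy: "d \<le> norm (y - x)"
      using infdist_le[OF that, of x] unfolding d_def dist_norm by (simp add: norm_minus_commute)
    have tri: "norm y - norm x \<le> norm (y - x)" by (rule norm_triangle_ineq2)
    have pos: "d + norm x > 0" using d by (simp add: add_pos_nonneg)
    have "d * norm y \<le> norm (y - x) * (d + norm x)"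
    proof (cases "norm y \<le> d + norm x")
      case True
      then have "d * norm y \<le> d * (d + norm x)" using d by (simp add: mult_left_mono)
      also have "\<dots> \<le> norm (y - x) * (d + norm x)" using dy pos by (simp add: mult_right_mono)
      finally show ?thesis .
    next
      case False
      then have "norm x * (d + norm x) \<le> norm x * norm y"
        by (intro mult_left_mono) auto
      then have "d * norm y \<le> (norm y - norm x) * (d + norm x)"
        by (simp add: algebra_simps)
      also have "\<dots> \<le> norm (y - x) * (d + norm x)" using tri pos by (simp add: mult_right_mono)
      finally show ?thesis .
    qed
    then show ?thesis using pos by (simp add: field_simps)
  qed
  moreover have "d / (d + norm x) > 0" using d by (simp add: add_pos_nonneg)
  ultimately show ?thesis using that by blast
qed

lemma D_eq_Compl: "D m = - {z. Im z = 0 \<and> 4 * m^2 \<le> Re z}"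
  unfolding D_def by auto

lemma closed_Compl_D: "closed (- D m)"
  unfolding D_eq_Compl double_complement
  by (intro closed_Collect_conj closed_Collect_eq closed_Collect_le) (auto intro: continuous_intros)

lemma norm_of_real_minus_D_lower_bound:
  assumes "\<gamma> \<in> D m"
  obtains \<epsilon> where "\<epsilon> > 0" "\<And>M. 4 * m^2 \<le> M \<Longrightarrow> \<epsilon> * M \<le> norm (complex_of_real M - \<gamma>)"
proof -
  obtain \<epsilon> where "\<epsilon> > 0" and \<epsilon>: "\<And>y. y \<in> - D m \<Longrightarrow> \<epsilon> * norm y \<le> norm (y - \<gamma>)"
    using closed_norm_diff_lower_bound[OF closed_Compl_D] assms by blast
  moreover have "\<epsilon> * M \<le> norm (complex_of_real M - \<gamma>)" if "4 * m^2 \<le> M" for M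
  proof -
    have "M \<ge> 0" using that by (smt (verit) zero_le_power2)
    with that show ?thesis using \<epsilon>[of "complex_of_real M"] unfolding D_eq_Compl by simp
  qed
  ultimately show ?thesis using that by blast
qed

lemma rho_nonneg: "0 \<le> rho m M"
proof (cases "4 * m^2 \<le> M \<and> M \<noteq> 0")
  case True
  then have "M > 0" by (smt (verit) zero_le_power2)
  with True have "4 * m^2 / M \<le> 1" by simp
  with \<open>M > 0\<close> show ?thesis unfolding rho_def by simp
qed (auto simp: rho_def)

lemma rho_le:
  assumes "M > 0"
  shows "rho m M \<le> 1 / (16 * pi^2 * M)"
proof (cases "4 * m^2 \<le> M")
  case True
  have "4 * m^2 / M \<ge> 0" using assms by simp
  then have "sqrt (1 - 4 * m^2 / M) \<le> 1" by simp
  with assms True show ?thesis unfolding rho_def by (simp add: field_simps)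
qed (use assms in \<open>simp add: rho_def\<close>)

lemma rho_threshold: "rho m (4 * m^2) = 0"
  unfolding rho_def by simp

lemma rho_borel_measurable[measurable]: "rho m \<in> borel_measurable borel"
  unfolding rho_def by measurable

lemma rhocheck_hat_borel_measurable[measurable]: "rhocheck_hat m \<in> borel_measurable borel"
  unfolding rhocheck_hat_def by measurable

lemma norm_rhocheck_hat_le:
  assumes "m \<noteq> 0"
  shows "norm (rhocheck_hat m p) \<le> \<bar>p\<bar> / (8 * pi * (p^2 + 4 * m^2))"
proof -
  have M: "p^2 + 4 * m^2 > 0" using assms by (simp add: add_nonneg_pos)
  have "norm (rhocheck_hat m p) = 2 * pi * \<bar>p\<bar> * rho m (p^2 + 4 * m^2)"
    using rho_nonneg[of m] unfolding rhocheck_hat_def norm_of_real by (simp add: abs_mult)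
  also have "\<dots> \<le> 2 * pi * \<bar>p\<bar> * (1 / (16 * pi^2 * (p^2 + 4 * m^2)))"
    using M by (intro mult_left_mono rho_le) auto
  also have "\<dots> = \<bar>p\<bar> / (8 * pi * (p^2 + 4 * m^2))"
    by (simp add: power2_eq_square)
  finally show ?thesis .
qed

section \<open>Resolvent terms\<close>

definition resolvent :: "real \<Rightarrow> complex \<Rightarrow> real \<Rightarrow> complex" where
  "resolvent m \<gamma> p = rhocheck_hat m p / (complex_of_real (p^2 + 4 * m^2) - \<gamma>)"

lemma cubic_decay_resolvent:
  assumes "m \<noteq> 0" "\<gamma> \<in> D m"
  shows "cubic_decay (resolvent m \<gamma>)"
proof -
  obtain \<epsilon> where "\<epsilon> > 0" and \<epsilon>: "\<And>M. 4 * m^2 \<le> M \<Longrightarrow> \<epsilon> * M \<le> norm (complex_of_real M - \<gamma>)"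
    using norm_of_real_minus_D_lower_bound[OF assms(2)] by blast
  define k where "k = min 1 (4 * m^2)"
  have "k > 0" using assms(1) unfolding k_def by simp
  have "norm (resolvent m \<gamma> p) \<le> 1 / (8 * pi * \<epsilon> * k^2) * \<bar>p\<bar> / (1 + p^2)^2" for p
  proof -
    define M where "M = p^2 + 4 * m^2"
    have "M > 0" using assms(1) unfolding M_def by (simp add: add_nonneg_pos)
    have kM: "k * (1 + p^2) \<le> M"
      unfolding k_def M_def using assms(1) by (intro min_one_mult_one_plus_square_le) simp
    have kp: "k * (1 + p^2) > 0"
      using \<open>k > 0\<close> by (simp add: add_pos_nonneg)
    have "norm (resolvent m \<gamma> p) \<le> (\<bar>p\<bar> / (8 * pi * M)) / (\<epsilon> * M)"
      unfolding resolvent_def norm_divide M_def[symmetric]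
      using norm_rhocheck_hat_le[OF assms(1), of p] \<epsilon>[of M] \<open>\<epsilon> > 0\<close> \<open>M > 0\<close>
      by (intro frac_le) (auto simp: M_def)
    also have "\<dots> = 1 / (8 * pi * \<epsilon>) * \<bar>p\<bar> / M^2"
      by (simp add: power2_eq_square)
    also have "\<dots> \<le> 1 / (8 * pi * \<epsilon>) * \<bar>p\<bar> / (k * (1 + p^2))^2"
      using kM kp \<open>\<epsilon> > 0\<close> \<open>M > 0\<close>
      by (intro divide_left_mono power_mono) (auto intro!: mult_pos_pos)
    also have "\<dots> = 1 / (8 * pi * \<epsilon> * k^2) * \<bar>p\<bar> / (1 + p^2)^2"
      by (simp add: power_mult_distrib)
    finally show ?thesis .
  qed
  moreover have "resolvent m \<gamma> \<in> borel_measurable borel"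
    unfolding resolvent_def by measurable
  ultimately show ?thesis unfolding cubic_decay_def by blast
qed

lemma set_integrable_lborel_iff_absolutely_integrable_on:
  fixes f :: "real \<Rightarrow> 'a::euclidean_space"
  assumes "S \<in> sets borel" "f \<in> borel_measurable borel"
  shows "set_integrable lborel S f \<longleftrightarrow> f absolutely_integrable_on S"
  unfolding set_integrable_def using assms by (simp add: integrable_completion)

lemma set_integral_square_substitution:
  fixes F :: "real \<Rightarrow> 'a::euclidean_space"
  assumes S: "S = {0<..} \<or> S = {..<0}" and F: "F \<in> borel_measurable borel"
    and int: "set_integrable lborel S (\<lambda>x. \<bar>x\<bar> *\<^sub>R F (x^2 + c))"
  shows "set_integrable lborel {c<..} F \<and> 2 *\<^sub>R (LBINT x:S. \<bar>x\<bar> *\<^sub>R F (x^2 + c)) = (LBINT M:{c<..}. F M)"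
proof -
  let ?g = "\<lambda>x::real. x^2 + c"
  have "inj_on ?g S"
  proof (rule inj_onI)
    fix x y assume "x \<in> S" "y \<in> S" "?g x = ?g y"
    then have "x = y \<or> x = - y" by (simp add: power2_eq_iff)
    with S \<open>x \<in> S\<close> \<open>y \<in> S\<close> show "x = y" by auto
  qed
  moreover have "?g ` S = {c<..}"
  proof
    show "?g ` S \<subseteq> {c<..}" using S by auto
    show "{c<..} \<subseteq> ?g ` S"
    proof
      fix M assume "M \<in> {c<..}"
      then have "?g (sqrt (M - c)) = M" "?g (- sqrt (M - c)) = M" "sqrt (M - c) > 0" by auto
      with S show "M \<in> ?g ` S"
        by (auto intro: image_eqI[where x = "sqrt (M - c)"] image_eqI[where x = "- sqrt (M - c)"])
    qed
  qed
  moreover have "(?g has_field_derivative 2 * x) (at x within S)" for x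
    by (auto intro!: derivative_eq_intros)
  moreover have int2: "set_integrable lborel S (\<lambda>x. \<bar>2 * x\<bar> *\<^sub>R F (?g x))"
    using set_integrable_scaleR_right[OF int, of 2] by (simp add: abs_mult)
  then have "(\<lambda>x. \<bar>2 * x\<bar> *\<^sub>R F (?g x)) absolutely_integrable_on S"
    using S F by (subst set_integrable_lborel_iff_absolutely_integrable_on[symmetric]) auto
  moreover have "S \<in> sets lebesgue" using S by auto
  ultimately have "F absolutely_integrable_on {c<..}"
    and "integral {c<..} F = integral S (\<lambda>x. \<bar>2 * x\<bar> *\<^sub>R F (?g x))"
    using has_absolute_integral_change_of_variables_real[of S ?g "\<lambda>x. 2 * x" F] by auto
  moreover have "set_integrable lborel {c<..} F"
    using \<open>F absolutely_integrable_on {c<..}\<close> F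
    by (simp add: set_integrable_lborel_iff_absolutely_integrable_on)
  moreover have "2 *\<^sub>R (LBINT x:S. \<bar>x\<bar> *\<^sub>R F (?g x)) = integral S (\<lambda>x. \<bar>2 * x\<bar> *\<^sub>R F (?g x))"
    using set_borel_integral_eq_integral(2)[OF int2] by (simp add: abs_mult flip: scaleR_scaleR)
  ultimately show ?thesis
    using set_borel_integral_eq_integral(2)[of "{c<..}" F] by simp
qed

lemma integral_abs_square_substitution:
  fixes F :: "real \<Rightarrow> 'a::euclidean_space"
  assumes F: "F \<in> borel_measurable borel"
    and int: "integrable lborel (\<lambda>x. \<bar>x\<bar> *\<^sub>R F (x^2 + c))"
  shows "(LINT x|lborel. \<bar>x\<bar> *\<^sub>R F (x^2 + c)) = (LBINT M:{c<..}. F M)"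
proof -
  let ?f = "\<lambda>x. \<bar>x\<bar> *\<^sub>R F (x^2 + c)"
  have half: "set_integrable lborel S ?f" if "S = {0<..} \<or> S = {..<0}" for S
    using int that unfolding set_integrable_def by (intro integrable_mult_indicator) auto
  have halves: "(LBINT x:S. ?f x) = (1/2 :: real) *\<^sub>R (LBINT M:{c<..}. F M)"
    if "S = {0<..} \<or> S = {..<0}" for S
  proof -
    have "(LBINT x:S. ?f x) = (1/2 :: real) *\<^sub>R (2 *\<^sub>R (LBINT x:S. ?f x))"
      by simp
    also have "2 *\<^sub>R (LBINT x:S. ?f x) = (LBINT M:{c<..}. F M)"
      using set_integral_square_substitution[OF that F half[OF that]] by blast
    finally show ?thesis .
  qed
  have "(LINT x|lborel. ?f x) = (LBINT x:{0<..} \<union> {..<0}. ?f x)"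
    unfolding set_lebesgue_integral_def by (intro Bochner_Integration.integral_cong) (auto simp: indicator_def)
  also have "\<dots> = (LBINT x:{0<..}. ?f x) + (LBINT x:{..<0}. ?f x)"
    by (intro set_integral_Un half) auto
  also have "\<dots> = (1/2 :: real) *\<^sub>R (LBINT M:{c<..}. F M) + (1/2 :: real) *\<^sub>R (LBINT M:{c<..}. F M)"
    by (simp add: halves)
  also have "\<dots> = (LBINT M:{c<..}. F M)"
    by (simp flip: scaleR_add_left)
  finally show ?thesis .
qed

lemma J_eq_set_integral_greaterThan:
  "J m \<gamma> = (LBINT M:{4 * m^2<..}. complex_of_real (rho m M) / (complex_of_real M - \<gamma>))"
  unfolding J_def set_lebesgue_integral_def
  by (intro Bochner_Integration.integral_cong) (auto simp: indicator_def rho_threshold)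

lemma integral_resolvent:
  assumes "m \<noteq> 0" "\<gamma> \<in> D m"
  shows "(LINT p|lborel. resolvent m \<gamma> p) = 2 * pi * J m \<gamma>"
proof -
  define F where "F M = complex_of_real (rho m M) / (complex_of_real M - \<gamma>)" for M
  have F: "F \<in> borel_measurable borel" unfolding F_def by measurable
  have eq: "resolvent m \<gamma> p = complex_of_real (2 * pi) * (\<bar>p\<bar> *\<^sub>R F (p^2 + 4 * m^2))" for p
    unfolding resolvent_def rhocheck_hat_def F_def by (simp add: scaleR_conv_of_real)
  have "integrable lborel (\<lambda>p. complex_of_real (1 / (2 * pi)) * resolvent m \<gamma> p)"
    using cubic_decay_imp_integrable[OF cubic_decay_resolvent[OF assms]] by simp
  then have "integrable lborel (\<lambda>p. \<bar>p\<bar> *\<^sub>R F (p^2 + 4 * m^2))"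
    unfolding eq by simp
  moreover have "J m \<gamma> = (LBINT M:{4 * m^2<..}. F M)"
    unfolding F_def by (rule J_eq_set_integral_greaterThan)
  ultimately have "(LINT p|lborel. \<bar>p\<bar> *\<^sub>R F (p^2 + 4 * m^2)) = J m \<gamma>"
    using integral_abs_square_substitution[OF F] by simp
  then show ?thesis
    unfolding eq Bochner_Integration.integral_mult_right_zero by simp
qed

lemma inv_fourier_at_0: "inv_fourier g 0 = integral\<^sup>L lborel g / (2 * pi)"
  unfolding inv_fourier_def by simp

lemma resolvent_expansion:
  assumes "m \<noteq> 0" "finite \<Gamma>" "\<Gamma> \<subseteq> D m"
    and h: "\<And>p. h p = (\<Sum>\<gamma>\<in>\<Gamma>. w \<gamma> / (complex_of_real (p^2 + 4 * m^2) - \<gamma>)) * rhocheck_hat m p / b"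
  shows "W22_hat h" and "inv_fourier h 0 = (\<Sum>\<gamma>\<in>\<Gamma>. w \<gamma> * J m \<gamma>) / b"
proof -
  have h_eq: "h = (\<lambda>p. \<Sum>\<gamma>\<in>\<Gamma>. w \<gamma> / b * resolvent m \<gamma> p)"
    unfolding h resolvent_def sum_distrib_right sum_divide_distrib by (simp add: field_simps)
  have decay: "cubic_decay (resolvent m \<gamma>)" if "\<gamma> \<in> \<Gamma>" for \<gamma>
    using assms that by (intro cubic_decay_resolvent) auto
  show "W22_hat h"
    unfolding h_eq using assms(2) decay by (intro cubic_decay_imp_W22_hat cubic_decay_sum cubic_decay_cmult)
  have "integrable lborel (resolvent m \<gamma>)" if "\<gamma> \<in> \<Gamma>" for \<gamma>
    using decay[OF that] by (rule cubic_decay_imp_integrable)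
  then have "integral\<^sup>L lborel h = (\<Sum>\<gamma>\<in>\<Gamma>. w \<gamma> / b * (2 * pi * J m \<gamma>))"
    unfolding h_eq using assms integral_resolvent by (simp add: integral_sum subset_iff)
  then show "inv_fourier h 0 = (\<Sum>\<gamma>\<in>\<Gamma>. w \<gamma> * J m \<gamma>) / b"
    unfolding inv_fourier_at_0 by (simp add: sum_divide_distrib)
qed

section \<open>Conjugation symmetry\<close>

lemma J_cnj: "J m (cnj z) = cnj (J m z)"
proof -
  have "cnj (J m z) = (LINT M|lborel. cnj (indicator {4 * m^2..} M *\<^sub>R (complex_of_real (rho m M) / (complex_of_real M - z))))"
    unfolding J_def set_lebesgue_integral_def by (rule Bochner_Integration.integral_cnj[symmetric])
  also have "\<dots> = J m (cnj z)"
    unfolding J_def set_lebesgue_integral_def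
    by (intro Bochner_Integration.integral_cong) (auto simp: scaleR_conv_of_real)
  finally show ?thesis by simp
qed

lemma cnj_in_D: "z \<in> D m \<Longrightarrow> cnj z \<in> D m"
  unfolding D_def by auto

lemma cnj_mem_solutions:
  fixes m a1 a2 b0 b1 b2 :: real and \<gamma> :: complex
  defines "S \<equiv> {\<gamma> \<in> D m. \<gamma> * (of_real a1 - \<gamma>) * (of_real a2 - \<gamma>) * J m \<gamma>
    = of_real b0 + of_real b1 * \<gamma> + of_real b2 * \<gamma>^2}"
  assumes "\<gamma> \<in> S"
  shows "cnj \<gamma> \<in> S"
proof -
  have "cnj (\<gamma> * (of_real a1 - \<gamma>) * (of_real a2 - \<gamma>) * J m \<gamma>) = cnj (of_real b0 + of_real b1 * \<gamma> + of_real b2 * \<gamma>^2)"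
    using assms unfolding S_def by simp
  then show ?thesis using assms cnj_in_D unfolding S_def by (simp add: J_cnj)
qed

lemma cnj_image_eq:
  assumes "\<And>x. x \<in> A \<Longrightarrow> cnj x \<in> A"
  shows "cnj ` A = A"
  using assms by (auto intro: image_eqI[where x = "cnj x" for x])

lemma sum_in_Reals_if_cnj_image_eq:
  assumes "cnj ` A = A" and "\<And>x. cnj (f x) = f (cnj x)"
  shows "(\<Sum>x\<in>A. f x) \<in> \<real>"
proof -
  have "cnj (\<Sum>x\<in>A. f x) = (\<Sum>x\<in>cnj ` A. f x)"
    by (simp add: assms(2) sum.reindex inj_on_def)
  then show ?thesis using assms(1) by (simp add: Reals_cnj_iff)
qed

lemma prod_in_Reals_if_cnj_image_eq:
  assumes "cnj ` A = A"
  shows "(\<Prod>x\<in>A. x) \<in> \<real>"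
proof -
  have "cnj (\<Prod>x\<in>A. x) = (\<Prod>x\<in>cnj ` A. x)"
    by (simp add: prod.reindex inj_on_def)
  then show ?thesis using assms by (simp add: Reals_cnj_iff)
qed

lemma elementary_symmetric_in_Reals:
  assumes "distinct [g0, g1, g2]" and "\<And>x. x \<in> {g0, g1, g2} \<Longrightarrow> cnj x \<in> {g0, g1, g2}"
  shows "g0 + g1 + g2 \<in> \<real>" and "g0 * g1 + g0 * g2 + g1 * g2 \<in> \<real>" and "g0 * g1 * g2 \<in> \<real>"
proof -
  have A: "cnj ` {g0, g1, g2} = {g0, g1, g2}" using assms(2) by (rule cnj_image_eq)
  have s1: "g0 + g1 + g2 = (\<Sum>x\<in>{g0, g1, g2}. x)"
    and s2: "g0^2 + g1^2 + g2^2 = (\<Sum>x\<in>{g0, g1, g2}. x^2)"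
    and p: "g0 * g1 * g2 = (\<Prod>x\<in>{g0, g1, g2}. x)"
    using assms(1) by (simp_all add: algebra_simps)
  show sum: "g0 + g1 + g2 \<in> \<real>"
    unfolding s1 using A by (rule sum_in_Reals_if_cnj_image_eq) simp
  have "g0^2 + g1^2 + g2^2 \<in> \<real>"
    unfolding s2 using A by (rule sum_in_Reals_if_cnj_image_eq) simp
  moreover have "g0 * g1 + g0 * g2 + g1 * g2 = ((g0 + g1 + g2)^2 - (g0^2 + g1^2 + g2^2)) / 2"
    by (simp add: field_simps power2_eq_square)
  ultimately show "g0 * g1 + g0 * g2 + g1 * g2 \<in> \<real>"
    using sum by (metis Reals_diff Reals_divide Reals_numeral Reals_power)
  show "g0 * g1 * g2 \<in> \<real>" unfolding p using A by (rule prod_in_Reals_if_cnj_image_eq)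
qed

section \<open>Three-point Lagrange interpolation\<close>

text \<open>\<open>lagrange_denom \<Gamma> \<gamma>\<close> is \<open>Q'(\<gamma>)\<close> for \<open>Q(z) = (\<Prod>\<delta>\<in>\<Gamma>. z - \<delta>)\<close>.\<close>

definition lagrange_denom :: "'a::comm_ring_1 set \<Rightarrow> 'a \<Rightarrow> 'a" where
  "lagrange_denom \<Gamma> \<gamma> = (\<Prod>\<delta>\<in>\<Gamma> - {\<gamma>}. \<gamma> - \<delta>)"

lemma lagrange_denom_three:
  assumes "distinct [g0, g1, g2]"
  shows "lagrange_denom {g0, g1, g2} g0 = (g0 - g1) * (g0 - g2)"
    and "lagrange_denom {g0, g1, g2} g1 = (g1 - g0) * (g1 - g2)"
    and "lagrange_denom {g0, g1, g2} g2 = (g2 - g0) * (g2 - g1)"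
  using assms by (auto simp: lagrange_denom_def insert_Diff_if)

text \<open>The weights \<open>1\<close>, \<open>\<gamma> + \<beta>2\<close> and \<open>-\<beta>0 / \<gamma>\<close> are the coefficients of
  \<open>Q(z) / (z - \<gamma>) = z^2 + (\<gamma> + \<beta>2) z - \<beta>0 / \<gamma>\<close>, so these identities compare coefficients in
  the Lagrange interpolation \<open>r(z) = (\<Sum>\<gamma>\<in>\<Gamma>. r \<gamma> Q(z) / ((z - \<gamma>) Q'(\<gamma>)))\<close>.\<close>

lemma lagrange_coefficients_three:
  fixes g0 g1 g2 c0 c1 c2 :: "'a::field"
  assumes "distinct [g0, g1, g2]" and "0 \<notin> {g0, g1, g2}" and r: "\<And>x. r x = c0 + c1 * x + c2 * x^2"
  defines "\<Gamma> \<equiv> {g0, g1, g2}" and "\<beta>0 \<equiv> - (g0 * g1 * g2)" and "\<beta>2 \<equiv> - (g0 + g1 + g2)"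
  shows "(\<Sum>\<gamma>\<in>\<Gamma>. r \<gamma> / lagrange_denom \<Gamma> \<gamma>) = c2"
    and "(\<Sum>\<gamma>\<in>\<Gamma>. (\<gamma> + \<beta>2) * r \<gamma> / lagrange_denom \<Gamma> \<gamma>) = c1"
    and "(\<Sum>\<gamma>\<in>\<Gamma>. (- \<beta>0 / \<gamma>) * r \<gamma> / lagrange_denom \<Gamma> \<gamma>) = c0"
proof -
  have ne: "g0 \<noteq> g1" "g0 \<noteq> g2" "g1 \<noteq> g2" "g1 \<noteq> g0" "g2 \<noteq> g0" "g2 \<noteq> g1"
    "g0 \<noteq> 0" "g1 \<noteq> 0" "g2 \<noteq> 0"
    using assms(1,2) by auto
  show "(\<Sum>\<gamma>\<in>\<Gamma>. r \<gamma> / lagrange_denom \<Gamma> \<gamma>) = c2"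
    "(\<Sum>\<gamma>\<in>\<Gamma>. (\<gamma> + \<beta>2) * r \<gamma> / lagrange_denom \<Gamma> \<gamma>) = c1"
    "(\<Sum>\<gamma>\<in>\<Gamma>. (- \<beta>0 / \<gamma>) * r \<gamma> / lagrange_denom \<Gamma> \<gamma>) = c0"
    using assms(1) unfolding \<Gamma>_def \<beta>0_def \<beta>2_def r
    by (simp_all add: lagrange_denom_three, simp_all add: divide_simps ne) (algebra+)
qed

lemma partial_fractions_three:
  fixes g0 g1 g2 a1 a2 z :: "'a::field"
  assumes "distinct [g0, g1, g2]" and "0 \<notin> {g0, g1, g2}" and "z \<notin> {g0, g1, g2}" and "z \<noteq> 0"
    and N: "\<And>x. N x = x * (a1 - x) * (a2 - x)"
  defines "\<Gamma> \<equiv> {g0, g1, g2}" and "Q \<equiv> (z - g0) * (z - g1) * (z - g2)"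
    and "\<beta>0 \<equiv> - (g0 * g1 * g2)" and "\<beta>1 \<equiv> g0 * g1 + g0 * g2 + g1 * g2" and "\<beta>2 \<equiv> - (g0 + g1 + g2)"
  shows "N z / Q - 1 = (\<Sum>\<gamma>\<in>\<Gamma>. N \<gamma> / lagrange_denom \<Gamma> \<gamma> / (z - \<gamma>))"
    and "- ((z * \<beta>1 + \<beta>0) / z^2) * (N z / Q) + a1 * a2 / z
      = (\<Sum>\<gamma>\<in>\<Gamma>. (\<gamma> + \<beta>2) * N \<gamma> / lagrange_denom \<Gamma> \<gamma> / (z - \<gamma>))"
    and "- (\<beta>0 / z) * (N z / Q) = (\<Sum>\<gamma>\<in>\<Gamma>. (- \<beta>0 / \<gamma>) * N \<gamma> / lagrange_denom \<Gamma> \<gamma> / (z - \<gamma>))"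
proof -
  have ne: "g0 \<noteq> g1" "g0 \<noteq> g2" "g1 \<noteq> g2" "g1 \<noteq> g0" "g2 \<noteq> g0" "g2 \<noteq> g1"
    "g0 \<noteq> 0" "g1 \<noteq> 0" "g2 \<noteq> 0" "z \<noteq> g0" "z \<noteq> g1" "z \<noteq> g2" "z \<noteq> 0"
    using assms(1-4) by auto
  show "N z / Q - 1 = (\<Sum>\<gamma>\<in>\<Gamma>. N \<gamma> / lagrange_denom \<Gamma> \<gamma> / (z - \<gamma>))"
    "- ((z * \<beta>1 + \<beta>0) / z^2) * (N z / Q) + a1 * a2 / z
      = (\<Sum>\<gamma>\<in>\<Gamma>. (\<gamma> + \<beta>2) * N \<gamma> / lagrange_denom \<Gamma> \<gamma> / (z - \<gamma>))"
    "- (\<beta>0 / z) * (N z / Q) = (\<Sum>\<gamma>\<in>\<Gamma>. (- \<beta>0 / \<gamma>) * N \<gamma> / lagrange_denom \<Gamma> \<gamma> / (z - \<gamma>))"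
    using assms(1) unfolding \<Gamma>_def Q_def \<beta>0_def \<beta>1_def \<beta>2_def N
    by (simp_all add: lagrange_denom_three, simp_all add: divide_simps ne) (algebra+)
qed

theorem proposition4p7:
  fixes m a1 a2 b0 b1 b2 :: real and \<gamma>0 \<gamma>1 \<gamma>2 :: complex
  assumes "m > 0" and "b0 \<noteq> 0" and "b1 \<noteq> 0" and "b2 \<noteq> 0"
    and "distinct [\<gamma>0, \<gamma>1, \<gamma>2]"
    and "{\<gamma> \<in> D m. \<gamma> * (of_real a1 - \<gamma>) * (of_real a2 - \<gamma>) * J m \<gamma>
            = of_real b0 + of_real b1 * \<gamma> + of_real b2 * \<gamma>^2} = {\<gamma>0, \<gamma>1, \<gamma>2}"
  defines "\<beta>0 \<equiv> - (\<gamma>0 * \<gamma>1 * \<gamma>2)"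
    and "\<beta>1 \<equiv> \<gamma>0 * \<gamma>1 + \<gamma>0 * \<gamma>2 + \<gamma>1 * \<gamma>2"
    and "\<beta>2 \<equiv> - (\<gamma>0 + \<gamma>1 + \<gamma>2)"
  defines "P \<equiv> \<lambda>M::real. (of_real M)^3 + \<beta>2 * (of_real M)^2 + \<beta>1 * of_real M + \<beta>0"
  defines "h2 \<equiv> \<lambda>p::real. let M = p^2 + 4 * m^2 in
              ((of_real (M * (M - a1) * (M - a2))) / P M - 1) * rhocheck_hat m p / of_real b2"
  defines "h1 \<equiv> \<lambda>p::real. let M = p^2 + 4 * m^2 in
              (- ((of_real M * \<beta>1 + \<beta>0) / of_real (M^2)) * (rhocheck_hat m p + of_real b2 * h2 p)
               + of_real (a1 * a2 / M) * rhocheck_hat m p) / of_real b1"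
  defines "h0 \<equiv> \<lambda>p::real. let M = p^2 + 4 * m^2 in
              (- (\<beta>0 / of_real M) * (rhocheck_hat m p + of_real b2 * h2 p)) / of_real b0"
  shows "\<beta>0 \<in> \<real> \<and> \<beta>1 \<in> \<real> \<and> \<beta>2 \<in> \<real>
     \<and> (\<forall>M::real. 4 * m^2 \<le> M \<longrightarrow> P M \<noteq> 0)
     \<and> W22_hat h0 \<and> W22_hat h1 \<and> W22_hat h2
     \<and> inv_fourier h0 0 = 1 \<and> inv_fourier h1 0 = 1 \<and> inv_fourier h2 0 = 1"
proof -
  define \<Gamma> where "\<Gamma> = {\<gamma>0, \<gamma>1, \<gamma>2}"
  define N where "N x = x * (of_real a1 - x) * (of_real a2 - x)" for x :: complex
  define R where "R x = of_real b0 + of_real b1 * x + of_real b2 * x^2" for x :: complex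
  define L where "L = lagrange_denom \<Gamma>"
  have sol: "{\<gamma> \<in> D m. N \<gamma> * J m \<gamma> = R \<gamma>} = \<Gamma>"
    using assms(6) unfolding N_def R_def \<Gamma>_def .
  then have \<Gamma>D: "\<Gamma> \<subseteq> D m" and NJ: "\<And>\<gamma>. \<gamma> \<in> \<Gamma> \<Longrightarrow> N \<gamma> * J m \<gamma> = R \<gamma>"
    by auto
  have "0 \<notin> \<Gamma>"
    using NJ[of 0] assms(2) by (auto simp: N_def R_def)
  have "cnj \<gamma> \<in> {\<gamma>0, \<gamma>1, \<gamma>2}" if "\<gamma> \<in> {\<gamma>0, \<gamma>1, \<gamma>2}" for \<gamma>
    using that unfolding assms(6)[symmetric] by (rule cnj_mem_solutions)
  from elementary_symmetric_in_Reals[OF assms(5) this]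
  have real: "\<beta>0 \<in> \<real>" "\<beta>1 \<in> \<real>" "\<beta>2 \<in> \<real>"
    unfolding \<beta>0_def \<beta>1_def \<beta>2_def by (simp_all only: Reals_minus_iff)
  have P: "P M = (of_real M - \<gamma>0) * (of_real M - \<gamma>1) * (of_real M - \<gamma>2)" for M
    unfolding P_def \<beta>0_def \<beta>1_def \<beta>2_def by algebra
  have outside: "complex_of_real M \<notin> \<Gamma>" "complex_of_real M \<noteq> 0" if "4 * m^2 \<le> M" for M
    using \<Gamma>D that assms(1) unfolding D_def by (auto simp: subset_iff)
  have Pnz: "\<forall>M. 4 * m^2 \<le> M \<longrightarrow> P M \<noteq> 0"
    using outside unfolding P \<Gamma>_def by auto
  have Mge: "4 * m^2 \<le> p^2 + 4 * m^2" for p :: real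
    by simp
  note pf = partial_fractions_three[OF assms(5) \<open>0 \<notin> \<Gamma>\<close>[unfolded \<Gamma>_def] outside[unfolded \<Gamma>_def] N_def,
      folded \<Gamma>_def L_def \<beta>0_def \<beta>1_def \<beta>2_def P, OF Mge Mge]
  note coeff = lagrange_coefficients_three[OF assms(5) \<open>0 \<notin> \<Gamma>\<close>[unfolded \<Gamma>_def] R_def,
      folded \<Gamma>_def L_def \<beta>0_def \<beta>2_def]
  have N_of_real: "complex_of_real (M * (M - a1) * (M - a2)) = N (of_real M)" for M
    unfolding N_def by (simp add: algebra_simps)
  have rho_h2: "rhocheck_hat m p + of_real b2 * h2 p = N (of_real (p^2 + 4 * m^2)) / P (p^2 + 4 * m^2) * rhocheck_hat m p" for p
  proof -
    have "of_real b2 * h2 p = (N (of_real (p^2 + 4 * m^2)) / P (p^2 + 4 * m^2) - 1) * rhocheck_hat m p"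
      using assms(4) unfolding h2_def Let_def N_of_real by simp
    then show ?thesis by (simp add: algebra_simps)
  qed
  have h2: "h2 p = (\<Sum>\<gamma>\<in>\<Gamma>. N \<gamma> / L \<gamma> / (of_real (p^2 + 4 * m^2) - \<gamma>)) * rhocheck_hat m p / of_real b2" for p
    unfolding h2_def Let_def N_of_real pf(1) ..
  have h1: "h1 p = (\<Sum>\<gamma>\<in>\<Gamma>. (\<gamma> + \<beta>2) * N \<gamma> / L \<gamma> / (of_real (p^2 + 4 * m^2) - \<gamma>)) * rhocheck_hat m p / of_real b1" for p
    unfolding pf(2)[symmetric] h1_def Let_def rho_h2 by (simp add: algebra_simps)
  have h0: "h0 p = (\<Sum>\<gamma>\<in>\<Gamma>. (- \<beta>0 / \<gamma>) * N \<gamma> / L \<gamma> / (of_real (p^2 + 4 * m^2) - \<gamma>)) * rhocheck_hat m p / of_real b0" for p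
    unfolding pf(3)[symmetric] h0_def Let_def rho_h2 by (simp add: algebra_simps)
  have J_sum: "(\<Sum>\<gamma>\<in>\<Gamma>. c \<gamma> * N \<gamma> / L \<gamma> * J m \<gamma>) = (\<Sum>\<gamma>\<in>\<Gamma>. c \<gamma> * R \<gamma> / L \<gamma>)" for c
    using NJ by (intro sum.cong) (auto simp flip: mult.assoc)
  have "m \<noteq> 0" "finite \<Gamma>"
    using assms(1) unfolding \<Gamma>_def by auto
  note expansion = resolvent_expansion[OF this \<Gamma>D]
  have "inv_fourier h2 0 = 1"
    using expansion(2)[OF h2] J_sum[of "\<lambda>_. 1"] coeff(1) assms(4) by simp
  moreover have "inv_fourier h1 0 = 1"
    using expansion(2)[OF h1] J_sum[of "\<lambda>\<gamma>. \<gamma> + \<beta>2"] coeff(2) assms(3) by simp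
  moreover have "inv_fourier h0 0 = 1"
    using expansion(2)[OF h0] J_sum[of "\<lambda>\<gamma>. - \<beta>0 / \<gamma>"] coeff(3) assms(2) by simp
  ultimately show ?thesis
    using expansion(1)[OF h0] expansion(1)[OF h1] expansion(1)[OF h2] real Pnz by blast
qed

end
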